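(* Let $\mathcal{N}$ be a finite set of polyphase nodes, each with the same finite set of phases $\mathcal{P}$, and let the branch graph $\mathcal{B}=(\mathcal{N},\mathcal{L})$, $\mathcal{L}\subseteq\mathcal{N}\times\mathcal{N}$, be weakly connected. Assume: (i) every branch $\ell\in\mathcal{L}$ has a complex $|\mathcal{P}|\times|\mathcal{P}|$ compound impedance matrix $Z_\ell$ with $Z_\ell=Z_\ell^{T}$, $Z_\ell$ invertible with $Y_\ell:=Z_\ell^{-1}$, and $\mathrm{Re}\{Z_\ell\}\succ 0$ (positive definite); (ii) every shunt $t\in\mathcal{T}$ (one per node) has a complex $|\mathcal{P}|\times|\mathcal{P}|$ compound admittance matrix $Y_t$ which is either $0$ or satisfies $Y_t=Y_t^{T}$, $Y_t$ invertible, and $\mathrm{Re}\{Y_t\}\succeq 0$. Let $Y=(A_{\mathcal{B}}^{\mathcal{P}})^{T}Y_{\mathcal{L}}A_{\mathcal{B}}^{\mathcal{P}}+Y_{\mathcal{T}}$ be the compound admittance matrix, and let $V,I\in\mathbb{C}^{|\mathcal{N}||\mathcal{P}|}$ satisfy $I=YV$. Let $\mathcal{Z}\subsetneq\mathcal{N}$, $\mathcal{Z}\neq\emptyset$, be such that $I_{\mathcal{Z}}=0$, and let $\mathcal{Z}^{\complement}:=\mathcal{N}\setminus\mathcal{Z}$. Then $Y_{\mathcal{Z}\times\mathcal{Z}}$ is invertible, $$V_{\mathcal{Z}}=-Y_{\mathcal{Z}\times\mathcal{Z}}^{-1}Y_{\mathcal{Z}\times\mathcal{Z}^{\complement}}V_{\mathcal{Z}^{\complement}},$$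 and $$I_{\mathcal{Z}^{\complement}}=(Y/Y_{\mathcal{Z}\times\mathcal{Z}})\,V_{\mathcal{Z}^{\complement}},\qquad Y/Y_{\mathcal{Z}\times\mathcal{Z}}:=Y_{\mathcal{Z}^{\complement}\times\mathcal{Z}^{\complement}}-Y_{\mathcal{Z}^{\complement}\times\mathcal{Z}}Y_{\mathcal{Z}\times\mathcal{Z}}^{-1}Y_{\mathcal{Z}\times\mathcal{Z}^{\complement}}.$$
   Context: Model of a polyphase power grid with an effectively grounded neutral conductor (neutral-to-ground voltage zero, connected to the reference points of all sources), so phase-to-ground voltages describe the system. $V_{n,p}$ and $I_{n,p}$ denote the complex phasors of the phase-to-ground voltage and injected current in phase $p$ of node $n$; $V_n=\mathrm{col}_{p\in\mathcal{P}}(V_{n,p})$, $V=\mathrm{col}_{n\in\mathcal{N}}(V_n)$, and similarly $I_n$, $I$. The shunts are $\mathcal{T}=\mathcal{N}\times\{\mathcal{G}\}$ where $\mathcal{G}$ is the ground node (one shunt from each node to ground). $A_{\mathcal{B}}$ is the edge-to-vertex incidence matrix of the directed graph $\mathcal{B}$ (row for branch $\ell=(m,n)$ has $+1$ in column $m$, $-1$ in column $n$, zeros elsewhere); $A_{\mathcal{B}}^{\mathcal{P}}:=A_{\mathcal{B}}\otimes I_{|\mathcal{P}|}$ (Kronecker product with the $|\mathcal{P}|\times|\mathcal{P}|$ identity). $Y_{\mathcal{L}}:=\mathrm{diag}_{\ell\in\mathcal{L}}(Y_\ell)$ and $Y_{\mathcal{T}}:=\mathrm{diag}_{t\in\mathcal{T}}(Y_t)$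 are block-diagonal. For disjoint node subsets $\mathcal{A},\mathcal{B}'\subseteq\mathcal{N}$, $I_{\mathcal{A}}$, $V_{\mathcal{B}'}$ and $Y_{\mathcal{A}\times\mathcal{B}'}$ denote the corresponding sub-blocks (all phases of the nodes in those sets). $\succ 0$ / $\succeq 0$ denote positive definite / semidefinite. *)

theory Defs
  imports "HOL-Analysis.Analysis"
begin

text \<open>Full network matrices/vectors over nodes x phases are functions on index
  pairs (node, phase); sub-blocks are obtained by restricting the index sets.\<close>

definition Re_mat :: "complex^'p^'p \<Rightarrow> real^'p^'p" where
  "Re_mat M = (\<chi> i j. Re (M $ i $ j))"

definition pos_def :: "real^'p^'p \<Rightarrow> bool" where
  "pos_def M \<longleftrightarrow> transpose M = M \<and> (\<forall>x. x \<noteq> 0 \<longrightarrow> x \<bullet> (M *v x) > 0)"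

definition pos_semidef :: "real^'p^'p \<Rightarrow> bool" where
  "pos_semidef M \<longleftrightarrow> transpose M = M \<and> (\<forall>x. x \<bullet> (M *v x) \<ge> 0)"

definition weakly_connected :: "('n \<times> 'n) set \<Rightarrow> bool" where
  "weakly_connected L \<longleftrightarrow> (L \<union> L\<inverse>)\<^sup>* = UNIV"

definition incidence :: "('n \<times> 'n) \<Rightarrow> 'n \<Rightarrow> complex" where
  "incidence l k = (if k = fst l then 1 else 0) - (if k = snd l then 1 else 0)"

text \<open>Kronecker product A_B (x) I_P; rows indexed by (branch, phase), columns by (node, phase).\<close>
definition incidence_P :: "(('n \<times> 'n) \<times> 'p) \<Rightarrow> ('n \<times> 'p) \<Rightarrow> complex" where
  "incidence_P r c = incidence (fst r) (fst c) * (if snd r = snd c then 1 else 0)"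

definition Y_L :: "(('n \<times> 'n) \<Rightarrow> complex^'p^'p) \<Rightarrow> (('n \<times> 'n) \<times> 'p) \<Rightarrow> (('n \<times> 'n) \<times> 'p) \<Rightarrow> complex" where
  "Y_L Yl r c = (if fst r = fst c then Yl (fst r) $ snd r $ snd c else 0)"

definition Y_T :: "('n \<Rightarrow> complex^'p^'p) \<Rightarrow> ('n \<times> 'p) \<Rightarrow> ('n \<times> 'p) \<Rightarrow> complex" where
  "Y_T Yt r c = (if fst r = fst c then Yt (fst r) $ snd r $ snd c else 0)"

definition compound_Y ::
  "('n \<times> 'n) set \<Rightarrow> (('n \<times> 'n) \<Rightarrow> complex^'p^'p) \<Rightarrow> ('n \<Rightarrow> complex^'p^'p)
    \<Rightarrow> ('n \<times> 'p) \<Rightarrow> ('n \<times> 'p) \<Rightarrow> complex" where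
  "compound_Y L Yl Yt i j =
     (\<Sum>r\<in>L \<times> (UNIV::'p set). \<Sum>s\<in>L \<times> (UNIV::'p set).
        incidence_P r i * Y_L Yl r s * incidence_P s j) + Y_T Yt i j"

definition idx :: "'n set \<Rightarrow> ('n \<times> 'p) set" where
  "idx S = S \<times> UNIV"

definition is_block_inverse :: "'i set \<Rightarrow> ('i \<Rightarrow> 'i \<Rightarrow> complex) \<Rightarrow> ('i \<Rightarrow> 'i \<Rightarrow> complex) \<Rightarrow> bool" where
  "is_block_inverse S Y M \<longleftrightarrow>
     (\<forall>i\<in>S. \<forall>j\<in>S. (\<Sum>k\<in>S. Y i k * M k j) = (if i = j then 1 else 0)) \<and>
     (\<forall>i\<in>S. \<forall>j\<in>S. (\<Sum>k\<in>S. M i k * Y k j) = (if i = j then 1 else 0))"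

definition block_invertible :: "'i set \<Rightarrow> ('i \<Rightarrow> 'i \<Rightarrow> complex) \<Rightarrow> bool" where
  "block_invertible S Y \<longleftrightarrow> (\<exists>M. is_block_inverse S Y M)"

definition block_inv :: "'i set \<Rightarrow> ('i \<Rightarrow> 'i \<Rightarrow> complex) \<Rightarrow> 'i \<Rightarrow> 'i \<Rightarrow> complex" where
  "block_inv S Y = (SOME M. is_block_inverse S Y M)"

definition schur :: "'i set \<Rightarrow> 'i set \<Rightarrow> ('i \<Rightarrow> 'i \<Rightarrow> complex) \<Rightarrow> 'i \<Rightarrow> 'i \<Rightarrow> complex" where
  "schur S C Y i j = Y i j - (\<Sum>k\<in>S. \<Sum>k'\<in>S. Y i k * block_inv S Y k k' * Y k' j)"

end

theory Submission
  imports Defs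
begin

text \<open>For a complex symmetric block M the real part of u^H M u is the sum of the real quadratic
  forms of Re M at Re u and at Im u, so Re Z > 0 makes every branch dissipate power, and the
  same holds for Y = Z^-1 because u^H Z^-1 u is the conjugate of y^H Z y with y = Z^-1 u.
  The power v^H Y v drawn by a voltage profile splits into branch and shunt terms; if v
  vanishes at some node but not everywhere, then by weak connectivity some branch sees a nonzero
  voltage drop, so Re (v^H Y v) > 0. A voltage profile supported on Z and annihilated by
  Y_ZZ therefore vanishes: Y_ZZ is invertible, and Kron reduction is then
  block elimination.\<close>

lemma sum_sum_antisym_eq_0:
  fixes f :: "'a \<Rightarrow> 'a \<Rightarrow> real"
  assumes "\<And>p q. f p q = - f q p"
  shows "(\<Sum>p\<in>A. \<Sum>q\<in>A. f p q) = 0"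
proof -
  have "(\<Sum>p\<in>A. \<Sum>q\<in>A. f p q) = (\<Sum>q\<in>A. \<Sum>p\<in>A. f p q)" by (rule sum.swap)
  also have "\<dots> = (\<Sum>q\<in>A. \<Sum>p\<in>A. - f q p)" by (intro sum.cong refl) (rule assms)
  also have "\<dots> = - (\<Sum>q\<in>A. \<Sum>p\<in>A. f q p)" by (simp only: sum_negf)
  finally show ?thesis by simp
qed

definition sesq_form :: "complex^'p::finite^'p \<Rightarrow> complex^'p \<Rightarrow> complex" where
  "sesq_form M u = (\<Sum>p\<in>UNIV. \<Sum>q\<in>UNIV. cnj (u$p) * M$p$q * u$q)"

lemma sesq_form_0_left [simp]: "sesq_form 0 u = 0"
  by (simp add: sesq_form_def)

lemma sesq_form_0_right [simp]: "sesq_form M 0 = 0"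
  by (simp add: sesq_form_def)

lemma sesq_form_alt: "sesq_form M u = (\<Sum>p\<in>UNIV. cnj (u$p) * (M *v u)$p)"
  unfolding sesq_form_def matrix_vector_mult_def by (simp add: sum_distrib_left mult.assoc)

lemma Re_sesq_form_symmetric:
  fixes M :: "complex^'p::finite^'p"
  assumes "transpose M = M"
  shows "Re (sesq_form M u) = (\<chi> p. Re (u$p)) \<bullet> (Re_mat M *v (\<chi> p. Re (u$p)))
                             + (\<chi> p. Im (u$p)) \<bullet> (Re_mat M *v (\<chi> p. Im (u$p)))"
proof -
  have sym: "M$p$q = M$q$p" for p q using assms by (metis transpose_def vec_lambda_beta)
  have "Re (sesq_form M u)
      = (\<Sum>p\<in>UNIV. \<Sum>q\<in>UNIV. Re (M$p$q) * (Re (u$p) * Re (u$q) + Im (u$p) * Im (u$q)))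
      - (\<Sum>p\<in>UNIV. \<Sum>q\<in>UNIV. Im (M$p$q) * (Re (u$p) * Im (u$q) - Im (u$p) * Re (u$q)))"
    unfolding sesq_form_def Re_sum sum_subtractf[symmetric] by (simp add: algebra_simps)
  also have "(\<Sum>p\<in>UNIV. \<Sum>q\<in>UNIV. Im (M$p$q) * (Re (u$p) * Im (u$q) - Im (u$p) * Re (u$q))) = 0"
    by (rule sum_sum_antisym_eq_0) (simp add: sym[of p q for p q] algebra_simps)
  also have "(\<Sum>p\<in>UNIV. \<Sum>q\<in>UNIV. Re (M$p$q) * (Re (u$p) * Re (u$q) + Im (u$p) * Im (u$q)))
      = (\<chi> p. Re (u$p)) \<bullet> (Re_mat M *v (\<chi> p. Re (u$p)))
      + (\<chi> p. Im (u$p)) \<bullet> (Re_mat M *v (\<chi> p. Im (u$p)))"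
    by (simp add: inner_vec_def matrix_vector_mult_def Re_mat_def sum_distrib_left
        sum.distrib[symmetric] algebra_simps)
  finally show ?thesis by simp
qed

lemma Re_sesq_form_pos:
  fixes M :: "complex^'p::finite^'p"
  assumes "transpose M = M" and "pos_def (Re_mat M)" and "u \<noteq> 0"
  shows "Re (sesq_form M u) > 0"
proof -
  let ?a = "\<chi> p. Re (u$p)" and ?b = "\<chi> p. Im (u$p)"
  have pos: "x \<noteq> 0 \<Longrightarrow> x \<bullet> (Re_mat M *v x) > 0" for x
    using assms(2) unfolding pos_def_def by blast
  then have nonneg: "x \<bullet> (Re_mat M *v x) \<ge> 0" for x
    by (cases "x = 0") (auto simp: less_imp_le)
  have "?a \<noteq> 0 \<or> ?b \<noteq> 0"
    using assms(3) by (auto simp: vec_eq_iff complex_eq_iff)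
  then show ?thesis
    unfolding Re_sesq_form_symmetric[OF assms(1)] using pos nonneg
    by (meson add_nonneg_pos add_pos_nonneg)
qed

lemma Re_sesq_form_nonneg:
  fixes M :: "complex^'p::finite^'p"
  assumes "transpose M = M" and "pos_semidef (Re_mat M)"
  shows "Re (sesq_form M u) \<ge> 0"
  using assms(2) unfolding Re_sesq_form_symmetric[OF assms(1)] pos_semidef_def by simp

lemma matrix_mul_matrix_inv:
  fixes Z :: "'a::field^'n::finite^'n"
  assumes "invertible Z"
  shows "Z ** matrix_inv Z = mat 1"
  using assms unfolding invertible_def matrix_inv_def by (rule someI2_ex) blast

lemma sesq_form_matrix_inv:
  fixes Z :: "complex^'p::finite^'p"
  assumes "invertible Z"
  shows "sesq_form (matrix_inv Z) u = cnj (sesq_form Z (matrix_inv Z *v u))"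
proof -
  let ?y = "matrix_inv Z *v u"
  have "Z *v ?y = u"
    by (simp add: matrix_vector_mul_assoc matrix_mul_matrix_inv[OF assms])
  then have "sesq_form (matrix_inv Z) u = (\<Sum>p\<in>UNIV. cnj ((Z *v ?y)$p) * ?y$p)"
    by (simp add: sesq_form_alt)
  also have "\<dots> = (\<Sum>p\<in>UNIV. \<Sum>q\<in>UNIV. cnj (Z$p$q) * cnj (?y$q) * ?y$p)"
    unfolding matrix_vector_mult_def by (simp add: sum_distrib_right)
  also have "\<dots> = cnj (sesq_form Z ?y)"
    unfolding sesq_form_def by (simp add: mult_ac)
  finally show ?thesis .
qed

lemma Re_sesq_form_matrix_inv_pos:
  fixes Z :: "complex^'p::finite^'p"
  assumes "transpose Z = Z" and "invertible Z" and "pos_def (Re_mat Z)" and "u \<noteq> 0"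
  shows "Re (sesq_form (matrix_inv Z) u) > 0"
proof -
  have "Z *v (matrix_inv Z *v u) = u"
    by (simp add: matrix_vector_mul_assoc matrix_mul_matrix_inv[OF assms(2)])
  then have "matrix_inv Z *v u \<noteq> 0" using assms(4) by auto
  then show ?thesis
    unfolding sesq_form_matrix_inv[OF assms(2)] using Re_sesq_form_pos[OF assms(1,3)] by simp
qed

lemma sum_incidence_P_mult:
  fixes v :: "'n::finite \<times> 'p::finite \<Rightarrow> complex"
  shows "(\<Sum>j\<in>UNIV. incidence_P (l, p) j * v j) = v (fst l, p) - v (snd l, p)"
proof -
  have "(\<Sum>j\<in>UNIV. incidence_P (l, p) j * v j)
      = (\<Sum>k\<in>UNIV. \<Sum>q\<in>UNIV. incidence_P (l, p) (k, q) * v (k, q))"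
    unfolding UNIV_Times_UNIV[symmetric] sum.cartesian_product' ..
  also have "\<dots> = (\<Sum>k\<in>UNIV. incidence l k * v (k, p))"
  proof (intro sum.cong refl)
    fix k
    have "(\<Sum>q\<in>UNIV. incidence_P (l, p) (k, q) * v (k, q))
        = (\<Sum>q\<in>UNIV. if p = q then incidence l k * v (k, q) else 0)"
      unfolding incidence_P_def by (intro sum.cong refl) simp
    then show "(\<Sum>q\<in>UNIV. incidence_P (l, p) (k, q) * v (k, q)) = incidence l k * v (k, p)"
      by simp
  qed
  also have "\<dots> = (\<Sum>k\<in>UNIV. if k = fst l then v (k, p) else 0)
                  - (\<Sum>k\<in>UNIV. if k = snd l then v (k, p) else 0)"
    unfolding incidence_def sum_subtractf[symmetric] by (intro sum.cong refl) (simp add: left_diff_distrib)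
  finally show ?thesis by simp
qed

lemma sum_bilinear_mult_assoc:
  fixes c d :: "'i \<Rightarrow> 'a::comm_semiring_1"
  shows "(\<Sum>i\<in>I. \<Sum>j\<in>J. c i * (\<Sum>r\<in>R. \<Sum>s\<in>S. f r i * g r s * h s j) * d j)
       = (\<Sum>r\<in>R. \<Sum>s\<in>S. (\<Sum>i\<in>I. c i * f r i) * g r s * (\<Sum>j\<in>J. h s j * d j))"
proof -
  have "(\<Sum>i\<in>I. \<Sum>j\<in>J. c i * (\<Sum>r\<in>R. \<Sum>s\<in>S. f r i * g r s * h s j) * d j)
      = (\<Sum>i\<in>I. \<Sum>j\<in>J. \<Sum>r\<in>R. \<Sum>s\<in>S. c i * f r i * g r s * h s j * d j)"
    by (simp add: sum_distrib_left sum_distrib_right mult_ac)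
  also have "\<dots> = (\<Sum>i\<in>I. \<Sum>r\<in>R. \<Sum>j\<in>J. \<Sum>s\<in>S. c i * f r i * g r s * h s j * d j)"
    by (intro sum.cong refl) (rule sum.swap)
  also have "\<dots> = (\<Sum>i\<in>I. \<Sum>r\<in>R. \<Sum>s\<in>S. \<Sum>j\<in>J. c i * f r i * g r s * h s j * d j)"
    by (intro sum.cong refl) (rule sum.swap)
  also have "\<dots> = (\<Sum>r\<in>R. \<Sum>i\<in>I. \<Sum>s\<in>S. \<Sum>j\<in>J. c i * f r i * g r s * h s j * d j)"
    by (rule sum.swap)
  also have "\<dots> = (\<Sum>r\<in>R. \<Sum>s\<in>S. \<Sum>i\<in>I. \<Sum>j\<in>J. c i * f r i * g r s * h s j * d j)"
    by (intro sum.cong refl) (rule sum.swap)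
  also have "\<dots> = (\<Sum>r\<in>R. \<Sum>s\<in>S. (\<Sum>i\<in>I. c i * f r i) * g r s * (\<Sum>j\<in>J. h s j * d j))"
    by (simp add: sum_distrib_left sum_distrib_right mult_ac)
  finally show ?thesis .
qed

lemma sesq_incidence_Y_L:
  fixes v :: "'n::finite \<times> 'p::finite \<Rightarrow> complex" and Yl :: "'n \<times> 'n \<Rightarrow> complex^'p^'p"
  shows "(\<Sum>i\<in>UNIV. \<Sum>j\<in>UNIV. cnj (v i) *
      (\<Sum>r\<in>L \<times> UNIV. \<Sum>s\<in>L \<times> UNIV. incidence_P r i * Y_L Yl r s * incidence_P s j) * v j)
    = (\<Sum>l\<in>L. sesq_form (Yl l) (\<chi> p. v (fst l, p) - v (snd l, p)))"
proof -
  define w where "w r = (\<Sum>j\<in>UNIV. incidence_P r j * v j)" for r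
  have w: "w (l, p) = v (fst l, p) - v (snd l, p)" for l p
    unfolding w_def by (rule sum_incidence_P_mult)
  have real_incidence: "cnj (incidence_P r i) = incidence_P r i" for r i
    by (simp add: incidence_P_def incidence_def)
  have cnj_w: "cnj (w r) = (\<Sum>i\<in>UNIV. cnj (v i) * incidence_P r i)" for r
    unfolding w_def by (simp add: real_incidence mult.commute)
  have "(\<Sum>i\<in>UNIV. \<Sum>j\<in>UNIV. cnj (v i) *
      (\<Sum>r\<in>L \<times> UNIV. \<Sum>s\<in>L \<times> UNIV. incidence_P r i * Y_L Yl r s * incidence_P s j) * v j)
    = (\<Sum>r\<in>L \<times> UNIV. \<Sum>s\<in>L \<times> UNIV. cnj (w r) * Y_L Yl r s * w s)"
    unfolding sum_bilinear_mult_assoc cnj_w unfolding w_def ..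
  also have "\<dots> = (\<Sum>l\<in>L. \<Sum>p\<in>UNIV. \<Sum>l'\<in>L. \<Sum>q\<in>UNIV.
                    cnj (w (l, p)) * Y_L Yl (l, p) (l', q) * w (l', q))"
    unfolding sum.cartesian_product' ..
  also have "\<dots> = (\<Sum>l\<in>L. \<Sum>p\<in>UNIV. \<Sum>l'\<in>L.
                    if l' = l then (\<Sum>q\<in>UNIV. cnj (w (l, p)) * Yl l $ p $ q * w (l, q)) else 0)"
    unfolding Y_L_def by (intro sum.cong refl) auto
  also have "\<dots> = (\<Sum>l\<in>L. \<Sum>p\<in>UNIV. \<Sum>q\<in>UNIV. cnj (w (l, p)) * Yl l $ p $ q * w (l, q))"
    by (intro sum.cong refl) (simp add: sum.delta')
  finally show ?thesis
    by (simp add: sesq_form_def w)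
qed

lemma sesq_Y_T:
  fixes v :: "'n::finite \<times> 'p::finite \<Rightarrow> complex" and Yt :: "'n \<Rightarrow> complex^'p^'p"
  shows "(\<Sum>i\<in>UNIV. \<Sum>j\<in>UNIV. cnj (v i) * Y_T Yt i j * v j)
    = (\<Sum>n\<in>UNIV. sesq_form (Yt n) (\<chi> p. v (n, p)))"
proof -
  have "(\<Sum>i\<in>UNIV. \<Sum>j\<in>UNIV. cnj (v i) * Y_T Yt i j * v j)
     = (\<Sum>n\<in>UNIV. \<Sum>p\<in>UNIV. \<Sum>n'\<in>UNIV. \<Sum>q\<in>UNIV. cnj (v (n, p)) * Y_T Yt (n, p) (n', q) * v (n', q))"
    unfolding UNIV_Times_UNIV[symmetric] sum.cartesian_product' ..
  also have "\<dots> = (\<Sum>n\<in>UNIV. \<Sum>p\<in>UNIV. \<Sum>n'\<in>UNIV.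
                    if n' = n then (\<Sum>q\<in>UNIV. cnj (v (n, p)) * Yt n $ p $ q * v (n, q)) else 0)"
    unfolding Y_T_def by (intro sum.cong refl) auto
  also have "\<dots> = (\<Sum>n\<in>UNIV. sesq_form (Yt n) (\<chi> p. v (n, p)))"
    unfolding sesq_form_def by (simp add: sum.delta')
  finally show ?thesis .
qed

lemma sesq_compound_Y:
  fixes v :: "'n::finite \<times> 'p::finite \<Rightarrow> complex"
  shows "(\<Sum>i\<in>UNIV. \<Sum>j\<in>UNIV. cnj (v i) * compound_Y L Yl Yt i j * v j)
    = (\<Sum>l\<in>L. sesq_form (Yl l) (\<chi> p. v (fst l, p) - v (snd l, p)))
    + (\<Sum>n\<in>UNIV. sesq_form (Yt n) (\<chi> p. v (n, p)))"
  unfolding compound_Y_def sesq_incidence_Y_L[symmetric] sesq_Y_T[symmetric]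
  by (simp add: distrib_left distrib_right sum.distrib)

lemma weakly_connected_const:
  assumes conn: "weakly_connected L" and edge: "\<And>l. l \<in> L \<Longrightarrow> f (fst l) = f (snd l)"
  shows "f a = f b"
proof -
  have "(a, b) \<in> (L \<union> L\<inverse>)\<^sup>*" using conn unfolding weakly_connected_def by simp
  then show ?thesis
  proof (induction rule: rtrancl_induct)
    case (step y z)
    then have "f y = f z" using edge[of "(y, z)"] edge[of "(z, y)"] by auto
    with step.IH show ?case by simp
  qed simp
qed

lemma Re_sesq_compound_Y_pos:
  fixes L :: "('n::finite \<times> 'n) set"
    and Zl Yl :: "'n \<times> 'n \<Rightarrow> complex^'p::finite^'p"
    and Yt :: "'n \<Rightarrow> complex^'p^'p"
    and v :: "'n \<times> 'p \<Rightarrow> complex"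
  assumes conn: "weakly_connected L"
    and branch: "\<And>l. l \<in> L \<Longrightarrow> transpose (Zl l) = Zl l \<and> invertible (Zl l)
                       \<and> Yl l = matrix_inv (Zl l) \<and> pos_def (Re_mat (Zl l))"
    and shunt: "\<And>n. Yt n = 0 \<or> (transpose (Yt n) = Yt n \<and> invertible (Yt n)
                       \<and> pos_semidef (Re_mat (Yt n)))"
    and grounded: "\<And>p. v (b, p) = 0" and nonzero: "v i \<noteq> 0"
  shows "Re (\<Sum>i\<in>UNIV. \<Sum>j\<in>UNIV. cnj (v i) * compound_Y L Yl Yt i j * v j) > 0"
proof -
  let ?u = "\<lambda>l. \<chi> p. v (fst l, p) - v (snd l, p)"
  have branch_pos: "Re (sesq_form (Yl l) (?u l)) > 0" if "l \<in> L" "?u l \<noteq> 0" for l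
    using branch[OF that(1)] Re_sesq_form_matrix_inv_pos that(2) by metis
  then have branch_nonneg: "Re (sesq_form (Yl l) (?u l)) \<ge> 0" if "l \<in> L" for l
    using that by (cases "?u l = 0") (auto simp: less_imp_le)
  have "\<exists>l\<in>L. ?u l \<noteq> 0"
  proof (rule ccontr)
    assume "\<not> (\<exists>l\<in>L. ?u l \<noteq> 0)"
    then have "v (fst l, p) = v (snd l, p)" if "l \<in> L" for l p
      using that by (auto simp: vec_eq_iff)
    then have "v (a, p) = v (b, p)" for a p
      by (rule weakly_connected_const[OF conn, where f = "\<lambda>n. v (n, p)"])
    with grounded nonzero show False by (cases i) simp
  qed
  then obtain l where "l \<in> L" "?u l \<noteq> 0" by blast
  then have "(\<Sum>l\<in>L. Re (sesq_form (Yl l) (?u l))) > 0"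
    by (intro sum_pos2[of L l]) (auto intro: branch_pos branch_nonneg)
  moreover have "(\<Sum>n\<in>UNIV. Re (sesq_form (Yt n) (\<chi> p. v (n, p)))) \<ge> 0"
  proof (intro sum_nonneg)
    show "Re (sesq_form (Yt n) (\<chi> p. v (n, p))) \<ge> 0" for n
      using shunt[of n] Re_sesq_form_nonneg by auto
  qed
  ultimately show ?thesis
    by (simp add: sesq_compound_Y Re_sum)
qed

lemma compound_Y_block_kernel_trivial:
  fixes L :: "('n::finite \<times> 'n) set"
    and Zl Yl :: "'n \<times> 'n \<Rightarrow> complex^'p::finite^'p"
    and Yt :: "'n \<Rightarrow> complex^'p^'p"
    and v :: "'n \<times> 'p \<Rightarrow> complex"
  assumes conn: "weakly_connected L"
    and branch: "\<And>l. l \<in> L \<Longrightarrow> transpose (Zl l) = Zl l \<and> invertible (Zl l)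
                       \<and> Yl l = matrix_inv (Zl l) \<and> pos_def (Re_mat (Zl l))"
    and shunt: "\<And>n. Yt n = 0 \<or> (transpose (Yt n) = Yt n \<and> invertible (Yt n)
                       \<and> pos_semidef (Re_mat (Yt n)))"
    and proper: "Zs \<noteq> UNIV"
    and supp: "\<And>i. i \<notin> idx Zs \<Longrightarrow> v i = 0"
    and ker: "\<And>i. i \<in> idx Zs \<Longrightarrow> (\<Sum>j\<in>idx Zs. compound_Y L Yl Yt i j * v j) = 0"
  shows "v = (\<lambda>_. 0)"
proof (rule ccontr)
  let ?Y = "compound_Y L Yl Yt"
  assume "v \<noteq> (\<lambda>_. 0)"
  then obtain i where nonzero: "v i \<noteq> 0" by (auto simp: fun_eq_iff)
  obtain b where "b \<notin> Zs" using proper by auto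
  then have grounded: "v (b, p) = 0" for p by (simp add: supp idx_def)
  have "(\<Sum>j\<in>UNIV. ?Y i j * v j) = (\<Sum>j\<in>idx Zs. ?Y i j * v j)" for i
    by (rule sum.mono_neutral_right) (auto simp: supp)
  then have "cnj (v i) * (\<Sum>j\<in>UNIV. ?Y i j * v j) = 0" for i
    by (cases "i \<in> idx Zs") (simp_all add: ker supp)
  then have "(\<Sum>i\<in>UNIV. \<Sum>j\<in>UNIV. cnj (v i) * ?Y i j * v j) = 0"
    by (simp add: sum_distrib_left mult.assoc)
  moreover have "Re (\<Sum>i\<in>UNIV. \<Sum>j\<in>UNIV. cnj (v i) * ?Y i j * v j) > 0"
    using conn branch shunt grounded nonzero by (rule Re_sesq_compound_Y_pos)
  ultimately show False by simp
qed

lemma block_invertibleI: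
  fixes Y :: "'i::finite \<Rightarrow> 'i \<Rightarrow> complex"
  assumes ker: "\<And>x. (\<And>i. i \<notin> S \<Longrightarrow> x i = 0) \<Longrightarrow> (\<And>i. i \<in> S \<Longrightarrow> (\<Sum>j\<in>S. Y i j * x j) = 0)
                  \<Longrightarrow> x = (\<lambda>_. 0)"
  shows "block_invertible S Y"
proof -
  define A :: "complex^'i^'i" where
    "A = (\<chi> i j. if i \<in> S \<and> j \<in> S then Y i j else if i = j then 1 else 0)"
  have row_in: "(\<Sum>k\<in>UNIV. A$i$k * x k) = (\<Sum>k\<in>S. Y i k * x k)" if "i \<in> S" for i x
    using that by (subst sum.mono_neutral_right[of UNIV S]) (auto simp: A_def)
  have row_out: "(\<Sum>k\<in>UNIV. A$i$k * x k) = x i" if "i \<notin> S" for i x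
  proof -
    have "(\<Sum>k\<in>UNIV. A$i$k * x k) = (\<Sum>k\<in>UNIV. if k = i then x k else 0)"
      using that by (intro sum.cong) (auto simp: A_def)
    then show ?thesis by simp
  qed
  have col_in: "(\<Sum>k\<in>UNIV. x k * A$k$j) = (\<Sum>k\<in>S. x k * Y k j)" if "j \<in> S" for j x
    using that by (subst sum.mono_neutral_right[of UNIV S]) (auto simp: A_def)
  have "x = 0" if "A *v x = 0" for x
  proof -
    have Ax: "(\<Sum>k\<in>UNIV. A$i$k * x$k) = 0" for i
      using that by (simp add: vec_eq_iff matrix_vector_mult_def)
    have "(\<lambda>i. x$i) = (\<lambda>_. 0)"
      using Ax row_in row_out by (intro ker) metis+
    then show ?thesis by (simp add: vec_eq_iff fun_eq_iff)
  qed
  then obtain B where BA: "B ** A = mat 1" using matrix_left_invertible_ker by blast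
  then have AB: "A ** B = mat 1" using matrix_left_right_inverse by blast
  have "is_block_inverse S Y (\<lambda>i j. B$i$j)"
    unfolding is_block_inverse_def
  proof (intro conjI ballI)
    fix i j assume "i \<in> S" "j \<in> S"
    show "(\<Sum>k\<in>S. Y i k * B$k$j) = (if i = j then 1 else 0)"
      using AB row_in[OF \<open>i \<in> S\<close>, of "\<lambda>k. B$k$j"]
      by (simp add: vec_eq_iff matrix_matrix_mult_def mat_def)
    show "(\<Sum>k\<in>S. B$i$k * Y k j) = (if i = j then 1 else 0)"
      using BA col_in[OF \<open>j \<in> S\<close>, of "\<lambda>k. B$i$k"]
      by (simp add: vec_eq_iff matrix_matrix_mult_def mat_def)
  qed
  then show ?thesis unfolding block_invertible_def by blast
qed

lemma is_block_inverse_block_inv: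
  assumes "block_invertible S Y"
  shows "is_block_inverse S Y (block_inv S Y)"
  using assms unfolding block_invertible_def block_inv_def by (rule someI_ex)

lemma sum_split_Compl:
  fixes g :: "'i::finite \<Rightarrow> 'a::comm_monoid_add"
  shows "(\<Sum>j\<in>UNIV. g j) = (\<Sum>j\<in>S. g j) + (\<Sum>j\<in>-S. g j)"
  using sum.subset_diff[of S UNIV g] by (simp add: Compl_eq_Diff_UNIV add.commute)

lemma block_elimination:
  fixes Y :: "'i::finite \<Rightarrow> 'i \<Rightarrow> complex"
  assumes inv: "block_invertible S Y"
    and IYV: "\<And>i. I i = (\<Sum>j\<in>UNIV. Y i j * V j)"
    and IS: "\<And>i. i \<in> S \<Longrightarrow> I i = 0"
    and i: "i \<in> S"
  shows "V i = - (\<Sum>k\<in>S. block_inv S Y i k * (\<Sum>j\<in>-S. Y k j * V j))"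
proof -
  let ?M = "block_inv S Y"
  have MY: "(\<Sum>k\<in>S. ?M i k * Y k j) = (if i = j then 1 else 0)" if "j \<in> S" for j
    using is_block_inverse_block_inv[OF inv] i that unfolding is_block_inverse_def by blast
  have YV: "(\<Sum>j\<in>S. Y k j * V j) = - (\<Sum>j\<in>-S. Y k j * V j)" if "k \<in> S" for k
    using IS[OF that] unfolding IYV sum_split_Compl[of _ S] by (simp add: eq_neg_iff_add_eq_0)
  have "V i = (\<Sum>j\<in>S. if i = j then V j else 0)"
    using i by simp
  also have "\<dots> = (\<Sum>j\<in>S. (\<Sum>k\<in>S. ?M i k * Y k j) * V j)"
    by (intro sum.cong refl) (simp add: MY)
  also have "\<dots> = (\<Sum>k\<in>S. ?M i k * (\<Sum>j\<in>S. Y k j * V j))"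
    by (simp add: sum_distrib_left sum_distrib_right mult.assoc) (rule sum.swap)
  also have "\<dots> = - (\<Sum>k\<in>S. ?M i k * (\<Sum>j\<in>-S. Y k j * V j))"
    by (simp add: YV sum_negf)
  finally show ?thesis .
qed

lemma kron_reduction:
  fixes Y :: "'i::finite \<Rightarrow> 'i \<Rightarrow> complex"
  assumes inv: "block_invertible S Y"
    and IYV: "\<And>i. I i = (\<Sum>j\<in>UNIV. Y i j * V j)"
    and IS: "\<And>i. i \<in> S \<Longrightarrow> I i = 0"
  shows "I i = (\<Sum>j\<in>-S. schur S (-S) Y i j * V j)"
proof -
  let ?M = "block_inv S Y"
  have "(\<Sum>k\<in>S. Y i k * V k)
      = - (\<Sum>k\<in>S. \<Sum>k'\<in>S. \<Sum>j\<in>-S. Y i k * ?M k k' * Y k' j * V j)"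
    by (simp add: block_elimination[OF inv IYV IS] sum_distrib_left sum_negf mult.assoc)
  also have "\<dots> = - (\<Sum>j\<in>-S. (\<Sum>k\<in>S. \<Sum>k'\<in>S. Y i k * ?M k k' * Y k' j) * V j)"
    by (subst sum.swap, subst (2) sum.swap) (simp add: sum_distrib_right)
  finally show ?thesis
    unfolding IYV sum_split_Compl[of _ S] schur_def
    by (simp add: left_diff_distrib sum_subtractf)
qed

theorem lemma1:
  fixes L :: "('n::finite \<times> 'n) set"
    and Zl Yl :: "'n \<times> 'n \<Rightarrow> complex^'p::finite^'p"
    and Yt :: "'n \<Rightarrow> complex^'p^'p"
    and V I :: "'n \<times> 'p \<Rightarrow> complex"
    and Zs :: "'n set"
  assumes conn: "weakly_connected L"
    and branch: "\<And>l. l \<in> L \<Longrightarrow> transpose (Zl l) = Zl l \<and> invertible (Zl l)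
                       \<and> Yl l = matrix_inv (Zl l) \<and> pos_def (Re_mat (Zl l))"
    and shunt: "\<And>n. Yt n = 0 \<or> (transpose (Yt n) = Yt n \<and> invertible (Yt n)
                       \<and> pos_semidef (Re_mat (Yt n)))"
    and IYV: "\<And>i. I i = (\<Sum>j\<in>UNIV. compound_Y L Yl Yt i j * V j)"
    and Zne: "Zs \<noteq> {}" and Zproper: "Zs \<noteq> UNIV"
    and IZ: "\<And>i. i \<in> idx Zs \<Longrightarrow> I i = 0"
  shows "block_invertible (idx Zs) (compound_Y L Yl Yt)
    \<and> (\<forall>i\<in>idx Zs. V i = - (\<Sum>k\<in>idx Zs. block_inv (idx Zs) (compound_Y L Yl Yt) i k *
           (\<Sum>j\<in>idx (UNIV - Zs). compound_Y L Yl Yt k j * V j)))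
    \<and> (\<forall>i\<in>idx (UNIV - Zs). I i = (\<Sum>j\<in>idx (UNIV - Zs).
           schur (idx Zs) (idx (UNIV - Zs)) (compound_Y L Yl Yt) i j * V j))"
proof -
  have inv: "block_invertible (idx Zs) (compound_Y L Yl Yt)"
    by (rule block_invertibleI, rule compound_Y_block_kernel_trivial[OF conn branch shunt Zproper])
  have "idx (UNIV - Zs) = - (idx Zs :: ('n \<times> 'p) set)"
    by (auto simp: idx_def)
  then show ?thesis
    using inv block_elimination[OF inv IYV IZ] kron_reduction[OF inv IYV IZ] by simp
qed

end
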